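(* Let $\mathbf d=(d_1,\dots,d_n)$ be a graphical degree sequence with $n$ even. Then $\overline{\mu}(\mathbf d)>0$ if and only if $(d_1-1,\dots,d_n-1)$ is also graphical.
   Context: All graphs are finite and simple. A sequence of nonnegative integers $(d_1,\dots,d_n)$ is graphical if some simple graph on $\{v_1,\dots,v_n\}$ has $d(v_i)=d_i$ for all $i$ (it realizes the sequence); a sequence with a negative entry is not graphical. For a graph $G=(V,E)$ on $n$ vertices, a fractional vertex cover is a function $f:V\to[0,\infty)$ with $f(u)+f(v)\ge 1$ for every edge $uv\in E$; $\tau^*(G)$ denotes the minimum of $\sum_{v\in V}f(v)$ over all fractional vertex covers. For $E'\subseteq E$ let $G-E'=(V,E\setminus E')$, and $\mu(G)=\min\{|E'| : E'\subseteq E,\ \tau^*(G-E')<n/2\}$. $\overline{\mu}(\mathbf d)$ is the maximum of $\mu(G)$ over all graphs realizing $\mathbf d$. *)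

theory Defs
  imports Complex_Main "HOL-Library.Extended_Nat"
begin

text \<open>Vertices are 0,...,n-1 (vertex v_i of the paper is i-1). A simple graph is a set of
  2-element subsets of the vertex set.\<close>

definition simple_graph :: "nat \<Rightarrow> nat set set \<Rightarrow> bool" where
  "simple_graph n E \<longleftrightarrow> (\<forall>e\<in>E. \<exists>u v. e = {u, v} \<and> u \<noteq> v \<and> u < n \<and> v < n)"

definition deg :: "nat set set \<Rightarrow> nat \<Rightarrow> nat" where
  "deg E v = card {e \<in> E. v \<in> e}"

text \<open>Integer sequences, so that negative entries are allowed (and are never realizable).\<close>
definition realizes :: "nat \<Rightarrow> (nat \<Rightarrow> int) \<Rightarrow> nat set set \<Rightarrow> bool" where
  "realizes n d E \<longleftrightarrow> simple_graph n E \<and> (\<forall>i<n. int (deg E i) = d i)"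

definition graphical :: "nat \<Rightarrow> (nat \<Rightarrow> int) \<Rightarrow> bool" where
  "graphical n d \<longleftrightarrow> (\<exists>E. realizes n d E)"

definition frac_cover :: "nat \<Rightarrow> nat set set \<Rightarrow> (nat \<Rightarrow> real) \<Rightarrow> bool" where
  "frac_cover n E f \<longleftrightarrow> (\<forall>v<n. f v \<ge> 0) \<and> (\<forall>u v. {u, v} \<in> E \<longrightarrow> f u + f v \<ge> 1)"

definition tau_star :: "nat \<Rightarrow> nat set set \<Rightarrow> real" where
  "tau_star n E = Inf {(\<Sum>v<n. f v) | f. frac_cover n E f}"

text \<open>Minimum over an empty set is taken to be infinity.\<close>
definition mu :: "nat \<Rightarrow> nat set set \<Rightarrow> enat" where
  "mu n E = Inf {enat (card E') | E'. E' \<subseteq> E \<and> tau_star n (E - E') < real n / 2}"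

definition mu_bar :: "nat \<Rightarrow> (nat \<Rightarrow> int) \<Rightarrow> enat" where
  "mu_bar n d = Sup {mu n E | E. realizes n d E}"

end

theory Submission
  imports Defs "HOL-Combinatorics.Orbits"
begin

text \<open>A perfect matching forces \<open>\<tau>\<^sup>* \<ge> n/2\<close>, and \<open>\<mu>(G) > 0\<close> just says \<open>\<tau>\<^sup>*(G) \<ge> n/2\<close>.
  If \<open>d - 1\<close> is graphical, Kundu's exchange argument gives a realization of \<open>d\<close> containing a
  perfect matching. Conversely, if a realization \<open>G\<close> has \<open>\<tau>\<^sup>*(G) \<ge> n/2\<close>, testing fractional
  covers of the form \<open>(1 - [v \<in> X] + [v \<in> N(X)])/2\<close> gives Hall's condition, so some permutation
  \<open>\<sigma>\<close> maps every vertex to a neighbour. As \<open>n\<close> is even, the odd cycles of \<open>\<sigma>\<close> can be paired off;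
  two odd cycles are joined by an edge, if necessary after one degree-preserving switch, and then
  their union has a perfect matching along the cycles. Deleting the perfect matching of the
  resulting realization of \<open>d\<close> realizes \<open>d - 1\<close>.\<close>

lemma simple_graph_finite:
  assumes "simple_graph n E" shows "finite E"
proof -
  have "E \<subseteq> Pow {..<n}" using assms unfolding simple_graph_def by auto
  then show ?thesis by (rule finite_subset) simp
qed

lemma simple_graph_subset: "simple_graph n E \<Longrightarrow> E' \<subseteq> E \<Longrightarrow> simple_graph n E'"
  unfolding simple_graph_def by blast

lemma simple_graph_edgeD: "simple_graph n E \<Longrightarrow> {u, v} \<in> E \<Longrightarrow> u \<noteq> v \<and> u < n \<and> v < n"
  unfolding simple_graph_def by (auto simp: doubleton_eq_iff)

lemma deg_Diff_singleton:
  assumes "finite E" "x \<in> E"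
  shows "deg (E - {x}) v = (if v \<in> x then deg E v - 1 else deg E v)"
proof -
  have "{e \<in> E - {x}. v \<in> e} = {e \<in> E. v \<in> e} - {x}" by auto
  then show ?thesis using assms unfolding deg_def by (auto simp: card_Diff_singleton_if)
qed

lemma deg_insert:
  assumes "finite E" "x \<notin> E"
  shows "deg (insert x E) v = (if v \<in> x then Suc (deg E v) else deg E v)"
proof -
  have "{e \<in> insert x E. v \<in> e} = (if v \<in> x then insert x {e \<in> E. v \<in> e} else {e \<in> E. v \<in> e})"
    by auto
  then show ?thesis using assms unfolding deg_def by auto
qed

lemma deg_pos: "finite E \<Longrightarrow> x \<in> E \<Longrightarrow> v \<in> x \<Longrightarrow> 0 < deg E v"
  unfolding deg_def by (subst card_gt_0_iff) auto

lemma deg_Int_Diff: "finite E \<Longrightarrow> deg E v = deg (E \<inter> F) v + deg (E - F) v"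
  unfolding deg_def by (subst card_Un_disjoint[symmetric]) (auto intro: arg_cong[where f = card])

definition nbrs :: "nat set set \<Rightarrow> nat \<Rightarrow> nat set" where
  "nbrs E v = {u. {v, u} \<in> E}"

lemma nbrs_subset: "simple_graph n E \<Longrightarrow> nbrs E v \<subseteq> {..<n}"
  unfolding nbrs_def using simple_graph_edgeD by blast

lemma finite_nbrs: "simple_graph n E \<Longrightarrow> finite (nbrs E v)"
  by (rule finite_subset[OF nbrs_subset finite_lessThan])

lemma deg_eq_card_nbrs:
  assumes "simple_graph n E"
  shows "deg E v = card (nbrs E v)"
proof -
  have "bij_betw (\<lambda>u. {v, u}) (nbrs E v) {e \<in> E. v \<in> e}"
  proof (rule bij_betwI')
    fix x y show "({v, x} = {v, y}) = (x = y)" by (auto simp: doubleton_eq_iff)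
  next
    fix x assume "x \<in> nbrs E v" then show "{v, x} \<in> {e \<in> E. v \<in> e}" by (simp add: nbrs_def)
  next
    fix e assume e: "e \<in> {e \<in> E. v \<in> e}"
    then obtain a b where "e = {a, b}" using assms unfolding simple_graph_def by blast
    then have "e = {v, if a = v then b else a}" using e by auto
    then show "\<exists>u\<in>nbrs E v. e = {v, u}" using e unfolding nbrs_def by auto
  qed
  then show ?thesis unfolding deg_def by (rule bij_betw_same_card[symmetric])
qed

definition switch :: "nat set set \<Rightarrow> nat \<Rightarrow> nat \<Rightarrow> nat \<Rightarrow> nat \<Rightarrow> nat set set" where
  "switch E a b c e = insert {a, c} (insert {b, e} (E - {{a, b}, {c, e}}))"

lemma simple_graph_deg_switch:
  assumes G: "simple_graph n E" and abce: "distinct [a, b, c, e]"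
    and in_E: "{a, b} \<in> E" "{c, e} \<in> E" and notin_E: "{a, c} \<notin> E" "{b, e} \<notin> E"
  shows "simple_graph n (switch E a b c e) \<and> (\<forall>v. deg (switch E a b c e) v = deg E v)"
proof
  have fin: "finite E" using G by (rule simple_graph_finite)
  have "a < n" "b < n" "c < n" "e < n"
    using simple_graph_edgeD[OF G in_E(1)] simple_graph_edgeD[OF G in_E(2)] by auto
  then show "simple_graph n (switch E a b c e)"
    using G abce unfolding simple_graph_def switch_def by auto
  show "\<forall>v. deg (switch E a b c e) v = deg E v"
  proof
    fix v
    let ?E1 = "E - {{a, b}}"
    let ?E2 = "?E1 - {{c, e}}"
    let ?E3 = "insert {b, e} ?E2"
    have ne: "{c, e} \<noteq> {a, b}" "{a, c} \<noteq> {b, e}" using abce by (auto simp: doubleton_eq_iff)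
    have eq: "switch E a b c e = insert {a, c} ?E3" unfolding switch_def by auto
    have d1: "deg ?E1 v = (if v \<in> {a, b} then deg E v - 1 else deg E v)"
      by (rule deg_Diff_singleton[OF fin in_E(1)])
    have d2: "deg ?E2 v = (if v \<in> {c, e} then deg ?E1 v - 1 else deg ?E1 v)"
      by (rule deg_Diff_singleton) (use fin in_E ne in auto)
    have d3: "deg ?E3 v = (if v \<in> {b, e} then Suc (deg ?E2 v) else deg ?E2 v)"
      by (rule deg_insert) (use fin notin_E in auto)
    have d4: "deg (insert {a, c} ?E3) v = (if v \<in> {a, c} then Suc (deg ?E3 v) else deg ?E3 v)"
      by (rule deg_insert) (use fin notin_E ne in auto)
    have p1: "v \<in> {a, b} \<Longrightarrow> 0 < deg E v" using deg_pos[OF fin in_E(1)] by auto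
    have p2: "v \<in> {c, e} \<Longrightarrow> 0 < deg ?E1 v" using deg_pos[of ?E1 "{c, e}"] fin in_E ne by auto
    have p3: "v \<in> {c, e} \<Longrightarrow> 0 < deg E v" using deg_pos[OF fin in_E(2)] by auto
    show "deg (switch E a b c e) v = deg E v"
      unfolding eq d4 d3 d2 d1 using abce p1 p2 p3 by auto
  qed
qed

lemma realizes_switch:
  assumes "realizes n d E" "distinct [a, b, c, e]"
    and "{a, b} \<in> E" "{c, e} \<in> E" "{a, c} \<notin> E" "{b, e} \<notin> E"
  shows "realizes n d (switch E a b c e)"
  using assms simple_graph_deg_switch[of n E a b c e] unfolding realizes_def by auto

definition has_perfect_matching :: "nat set set \<Rightarrow> nat set \<Rightarrow> bool" where
  "has_perfect_matching E S \<longleftrightarrow>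
     (\<exists>p. \<forall>w\<in>S. p w \<in> S \<and> p w \<noteq> w \<and> p (p w) = w \<and> {w, p w} \<in> E)"

lemma has_perfect_matching_empty: "has_perfect_matching E {}"
  unfolding has_perfect_matching_def by simp

lemma has_perfect_matching_edge: "u \<noteq> v \<Longrightarrow> {u, v} \<in> E \<Longrightarrow> has_perfect_matching E {u, v}"
  unfolding has_perfect_matching_def
  by (rule exI[of _ "\<lambda>w. if w = u then v else u"]) (auto simp: insert_commute)

lemma has_perfect_matching_Un:
  assumes "has_perfect_matching E S" "has_perfect_matching E T" "S \<inter> T = {}"
  shows "has_perfect_matching E (S \<union> T)"
proof -
  obtain p where "\<forall>w\<in>S. p w \<in> S \<and> p w \<noteq> w \<and> p (p w) = w \<and> {w, p w} \<in> E"
    using assms(1) unfolding has_perfect_matching_def by blast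
  moreover obtain q where "\<forall>w\<in>T. q w \<in> T \<and> q w \<noteq> w \<and> q (q w) = w \<and> {w, q w} \<in> E"
    using assms(2) unfolding has_perfect_matching_def by blast
  ultimately show ?thesis using assms(3) unfolding has_perfect_matching_def
    by (intro exI[of _ "\<lambda>w. if w \<in> S then p w else q w"]) auto
qed

lemma has_perfect_matching_mono:
  assumes "has_perfect_matching E S" "\<And>u v. u \<in> S \<Longrightarrow> v \<in> S \<Longrightarrow> {u, v} \<in> E \<Longrightarrow> {u, v} \<in> E'"
  shows "has_perfect_matching E' S"
  using assms unfolding has_perfect_matching_def by metis

lemma has_perfect_matching_path:
  assumes "inj_on s {lo..<lo + 2 * t}" "\<And>i. lo \<le> i \<Longrightarrow> Suc i < lo + 2 * t \<Longrightarrow> {s i, s (Suc i)} \<in> E"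
  shows "has_perfect_matching E (s ` {lo..<lo + 2 * t})"
  using assms
proof (induction t arbitrary: lo)
  case 0
  then show ?case by (simp add: has_perfect_matching_empty)
next
  case (Suc t)
  let ?rest = "{Suc (Suc lo)..<Suc (Suc lo) + 2 * t}"
  have "inj_on s ?rest" using Suc.prems(1) by (rule inj_on_subset) auto
  then have rest: "has_perfect_matching E (s ` ?rest)"
    by (rule Suc.IH) (use Suc.prems(2) in auto)
  have "s lo \<noteq> s (Suc lo)" using Suc.prems(1) by (auto dest: inj_onD)
  then have first: "has_perfect_matching E {s lo, s (Suc lo)}"
    by (rule has_perfect_matching_edge) (use Suc.prems(2)[of lo] in auto)
  have "{s lo, s (Suc lo)} \<inter> s ` ?rest = {}"
    using Suc.prems(1) unfolding inj_on_def by fastforce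
  moreover have "s ` {lo..<lo + 2 * Suc t} = {s lo, s (Suc lo)} \<union> s ` ?rest"
    by (auto simp: image_iff) (metis Suc_le_eq atLeastLessThan_iff le_antisym not_less_eq_eq)
  ultimately show ?case using has_perfect_matching_Un[OF first rest] by simp
qed

lemma graphical_minus_one_if_perfect_matching:
  assumes R: "realizes n d E" and M: "has_perfect_matching E {..<n}"
  shows "graphical n (\<lambda>i. d i - 1)"
proof -
  obtain p where p: "\<forall>w\<in>{..<n}. p w \<in> {..<n} \<and> p w \<noteq> w \<and> p (p w) = w \<and> {w, p w} \<in> E"
    using M unfolding has_perfect_matching_def by blast
  have G: "simple_graph n E" and fin: "finite E"
    using R simple_graph_finite unfolding realizes_def by auto
  define P where "P = (\<lambda>w. {w, p w}) ` {..<n}"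
  have P_at: "e = {v, p v}" if "e \<in> P" "v \<in> e" "v < n" for e v
  proof -
    obtain w where w: "w < n" "e = {w, p w}" using \<open>e \<in> P\<close> unfolding P_def by auto
    then consider "v = w" | "v = p w" using \<open>v \<in> e\<close> by auto
    then show ?thesis
    proof cases
      case 2
      then have "p v = w" using p w(1) by auto
      then show ?thesis using w 2 by auto
    qed (use w in auto)
  qed
  have "int (deg (E - P) v) = d v - 1" if v: "v < n" for v
  proof -
    have edge: "{v, p v} \<in> {e \<in> E. v \<in> e}" "{v, p v} \<in> P" using p v unfolding P_def by auto
    have "{e \<in> E - P. v \<in> e} = {e \<in> E. v \<in> e} - {{v, p v}}"
      using P_at v edge(2) by blast
    then have "deg (E - P) v = deg E v - 1"
      unfolding deg_def using fin edge(1) by (simp add: card_Diff_singleton)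
    moreover have "0 < deg E v" using deg_pos[OF fin] edge(1) by blast
    moreover have "int (deg E v) = d v" using R v unfolding realizes_def by auto
    ultimately show ?thesis by simp
  qed
  then have "realizes n (\<lambda>i. d i - 1) (E - P)"
    using simple_graph_subset[OF G] unfolding realizes_def by blast
  then show ?thesis unfolding graphical_def by blast
qed

lemma bdd_below_frac_cover_sums: "bdd_below {(\<Sum>v<n. f v) | f. frac_cover n E f}"
  unfolding bdd_below_def frac_cover_def by (rule exI[of _ 0]) (auto intro: sum_nonneg)

lemma tau_star_le: "frac_cover n E f \<Longrightarrow> tau_star n E \<le> (\<Sum>v<n. f v)"
  unfolding tau_star_def by (rule cInf_lower[OF _ bdd_below_frac_cover_sums]) blast

lemma tau_star_ge_half_if_perfect_matching:
  assumes "has_perfect_matching E {..<n}"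
  shows "real n / 2 \<le> tau_star n E"
proof -
  obtain p where p: "\<forall>w\<in>{..<n}. p w \<in> {..<n} \<and> p w \<noteq> w \<and> p (p w) = w \<and> {w, p w} \<in> E"
    using assms unfolding has_perfect_matching_def by blast
  have bij: "bij_betw p {..<n} {..<n}"
    by (rule bij_betwI[of _ _ _ p]) (use p in auto)
  have "frac_cover n E (\<lambda>_. 1)" unfolding frac_cover_def by auto
  then have nonempty: "{(\<Sum>v<n. f v) | f. frac_cover n E f} \<noteq> {}" by blast
  have "real n / 2 \<le> (\<Sum>v<n. f v)" if f: "frac_cover n E f" for f
  proof -
    have "real n \<le> (\<Sum>v<n. f v + f (p v))"
      using sum_mono[of "{..<n}" "\<lambda>_. 1::real" "\<lambda>v. f v + f (p v)"] f p
      unfolding frac_cover_def by auto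
    also have "\<dots> = 2 * (\<Sum>v<n. f v)"
      using sum.reindex_bij_betw[OF bij, of f] by (simp add: sum.distrib)
    finally show ?thesis by simp
  qed
  then show ?thesis unfolding tau_star_def by (intro cInf_greatest[OF nonempty]) blast
qed

lemma mu_pos_iff_tau_star:
  assumes "finite E"
  shows "0 < mu n E \<longleftrightarrow> real n / 2 \<le> tau_star n E"
proof
  assume "0 < mu n E"
  show "real n / 2 \<le> tau_star n E"
  proof (rule ccontr)
    assume "\<not> ?thesis"
    then have "enat (card {}) \<in> {enat (card E') | E'. E' \<subseteq> E \<and> tau_star n (E - E') < real n / 2}"
      by force
    then have "mu n E \<le> 0" unfolding mu_def zero_enat_def by (rule Inf_lower[THEN order_trans]) simp
    with \<open>0 < mu n E\<close> show False by simp
  qed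
next
  assume tau: "real n / 2 \<le> tau_star n E"
  have "1 \<le> mu n E" unfolding mu_def
  proof (rule Inf_greatest)
    fix x assume "x \<in> {enat (card E') | E'. E' \<subseteq> E \<and> tau_star n (E - E') < real n / 2}"
    then obtain E' where E': "x = enat (card E')" "E' \<subseteq> E" "tau_star n (E - E') < real n / 2"
      by blast
    have "E' \<noteq> {}" using E' tau by auto
    moreover have "finite E'" using E'(2) assms by (rule finite_subset)
    ultimately show "1 \<le> x" using E'(1) by (simp add: one_enat_def Suc_leI card_gt_0_iff)
  qed
  then show "0 < mu n E" by (rule order_less_le_trans[OF zero_less_one])
qed

lemma mu_bar_pos_iff_tau_star: "0 < mu_bar n d \<longleftrightarrow> (\<exists>E. realizes n d E \<and> real n / 2 \<le> tau_star n E)"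
  unfolding mu_bar_def less_Sup_iff
  using mu_pos_iff_tau_star simple_graph_finite unfolding realizes_def by blast

definition hall_condition :: "'i set \<Rightarrow> ('i \<Rightarrow> 'a set) \<Rightarrow> bool" where
  "hall_condition I A \<longleftrightarrow> (\<forall>J\<subseteq>I. card J \<le> card (\<Union> (A ` J)))"

definition sdr :: "'i set \<Rightarrow> ('i \<Rightarrow> 'a set) \<Rightarrow> ('i \<Rightarrow> 'a) \<Rightarrow> bool" where
  "sdr I A r \<longleftrightarrow> inj_on r I \<and> (\<forall>i\<in>I. r i \<in> A i)"

lemma sdr_Un:
  assumes "sdr J A r" "sdr K (\<lambda>i. A i - U) s" "r ` J \<subseteq> U"
  shows "sdr (J \<union> K) A (\<lambda>i. if i \<in> J then r i else s i)"
proof -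
  have "r ` J \<inter> s ` K = {}" using assms unfolding sdr_def by auto
  then show ?thesis using assms unfolding sdr_def by (auto intro: inj_on_disjoint_Un)
qed

lemma hall_condition_subset: "hall_condition I A \<Longrightarrow> J \<subseteq> I \<Longrightarrow> hall_condition J A"
  unfolding hall_condition_def by blast

lemma hall_condition_Diff_tight:
  assumes hall: "hall_condition I A" and fin: "finite I" "\<forall>i\<in>I. finite (A i)"
    and J: "J \<subseteq> I" "card (\<Union> (A ` J)) = card J"
  shows "hall_condition (I - J) (\<lambda>i. A i - \<Union> (A ` J))"
  unfolding hall_condition_def
proof (intro allI impI)
  fix L assume L: "L \<subseteq> I - J"
  let ?U = "\<Union> (A ` J)"
  have fin_U: "finite (\<Union> (A ` K))" if "K \<subseteq> I" for K
    using that fin by (meson finite_UN_I finite_subset subsetD)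
  have LJ: "L \<union> J \<subseteq> I" using L J(1) by blast
  have "card L + card J = card (L \<union> J)"
    using L fin J(1) finite_subset[of L I] finite_subset[of J I] by (subst card_Un_disjoint) auto
  also have "\<dots> \<le> card (\<Union> (A ` (L \<union> J)))"
    using hall LJ unfolding hall_condition_def by blast
  finally have "card L + card ?U \<le> card (\<Union> (A ` (L \<union> J)))" using J(2) by simp
  moreover have "card (\<Union> (A ` (L \<union> J))) - card ?U \<le> card (\<Union> (A ` (L \<union> J)) - ?U)"
    by (rule diff_card_le_card_Diff) (use fin_U[OF J(1)] in auto)
  moreover have "\<Union> ((\<lambda>i. A i - ?U) ` L) = \<Union> (A ` (L \<union> J)) - ?U" by auto
  ultimately show "card L \<le> card (\<Union> ((\<lambda>i. A i - ?U) ` L))" by simp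
qed

lemma hall_condition_remove:
  assumes surplus: "\<forall>J\<subseteq>I. J \<noteq> {} \<longrightarrow> J \<noteq> I \<longrightarrow> card J < card (\<Union> (A ` J))" and "i \<in> I"
  shows "hall_condition (I - {i}) (\<lambda>j. A j - {x})"
  unfolding hall_condition_def
proof (intro allI impI)
  fix J assume J: "J \<subseteq> I - {i}"
  show "card J \<le> card (\<Union> ((\<lambda>j. A j - {x}) ` J))"
  proof (cases "J = {}")
    case False
    then have "card J < card (\<Union> (A ` J))" using surplus J \<open>i \<in> I\<close> by blast
    moreover have "card (\<Union> (A ` J)) - 1 \<le> card (\<Union> (A ` J) - {x})"
      using diff_card_le_card_Diff[of "{x}" "\<Union> (A ` J)"] by simp
    moreover have "\<Union> ((\<lambda>j. A j - {x}) ` J) = \<Union> (A ` J) - {x}" by auto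
    ultimately show ?thesis by simp
  qed simp
qed

lemma hall_condition_cases:
  assumes "hall_condition I A"
  obtains (tight) J where "J \<subseteq> I" "J \<noteq> {}" "J \<noteq> I" "card (\<Union> (A ` J)) = card J"
    | (surplus) "\<forall>J\<subseteq>I. J \<noteq> {} \<longrightarrow> J \<noteq> I \<longrightarrow> card J < card (\<Union> (A ` J))"
proof (cases "\<exists>J\<subseteq>I. J \<noteq> {} \<and> J \<noteq> I \<and> card (\<Union> (A ` J)) = card J")
  case False
  then have "\<forall>J\<subseteq>I. J \<noteq> {} \<longrightarrow> J \<noteq> I \<longrightarrow> card J < card (\<Union> (A ` J))"
    using assms unfolding hall_condition_def by (metis le_neq_implies_less)
  then show ?thesis using that(2) by blast
qed (use that(1) in blast)

theorem hall_marriage: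
  assumes "finite I" "\<forall>i\<in>I. finite (A i)" "hall_condition I A"
  shows "\<exists>r. sdr I A r"
  using assms
proof (induction "card I" arbitrary: I A rule: less_induct)
  case less
  note fin = less.prems(1,2) and hall = less.prems(3)
  from hall show ?case
  proof (cases rule: hall_condition_cases)
    case (tight J)
    let ?U = "\<Union> (A ` J)"
    have fin_J: "finite J" using tight(1) fin(1) by (rule finite_subset)
    have lt_J: "card J < card I" by (rule psubset_card_mono[OF fin(1)]) (use tight in auto)
    have lt_rest: "card (I - J) < card I" by (rule psubset_card_mono[OF fin(1)]) (use tight in auto)
    obtain r where r: "sdr J A r"
      using less.hyps[OF lt_J fin_J] fin(2) tight(1) hall_condition_subset[OF hall tight(1)]
        by blast
    have "\<exists>s. sdr (I - J) (\<lambda>i. A i - ?U) s"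
      by (rule less.hyps[OF lt_rest])
        (use fin hall_condition_Diff_tight[OF hall fin tight(1,4)] in auto)
    then obtain s where s: "sdr (I - J) (\<lambda>i. A i - ?U) s" ..
    have "r ` J \<subseteq> ?U" using r unfolding sdr_def by auto
    then have "sdr (J \<union> (I - J)) A (\<lambda>i. if i \<in> J then r i else s i)" by (rule sdr_Un[OF r s])
    moreover have "J \<union> (I - J) = I" using tight(1) by blast
    ultimately show ?thesis by auto
  next
    case surplus
    show ?thesis
    proof (cases "I = {}")
      case False
      then obtain i where i: "i \<in> I" by blast
      have "card {i} \<le> card (\<Union> (A ` {i}))" using hall i unfolding hall_condition_def by blast
      then have "A i \<noteq> {}" by auto
      then obtain x where x: "x \<in> A i" by blast
      have lt: "card (I - {i}) < card I" by (rule card_Diff1_less[OF fin(1) i])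
      have "\<exists>s. sdr (I - {i}) (\<lambda>j. A j - {x}) s"
        by (rule less.hyps[OF lt]) (use fin hall_condition_remove[OF surplus i] in auto)
      then obtain s where s: "sdr (I - {i}) (\<lambda>j. A j - {x}) s" ..
      have "sdr {i} A (\<lambda>_. x)" unfolding sdr_def using x by simp
      then have "sdr ({i} \<union> (I - {i})) A (\<lambda>j. if j \<in> {i} then x else s j)"
        by (rule sdr_Un[OF _ s]) simp
      moreover have "{i} \<union> (I - {i}) = I" using i by blast
      ultimately show ?thesis by auto
    qed (intro exI, simp add: sdr_def)
  qed
qed

lemma card_le_card_nbrs_if_tau_star:
  assumes G: "simple_graph n E" and tau: "real n / 2 \<le> tau_star n E" and X: "X \<subseteq> {..<n}"
  shows "card X \<le> card (\<Union> (nbrs E ` X))"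
proof -
  define N where "N = \<Union> (nbrs E ` X)"
  have N: "N \<subseteq> {..<n}" unfolding N_def using nbrs_subset[OF G] by blast
  define f where "f v = (1 - of_bool (v \<in> X) + of_bool (v \<in> N)) / (2::real)" for v
  have "frac_cover n E f"
    unfolding frac_cover_def
  proof (intro conjI allI impI)
    fix u v assume "{u, v} \<in> E"
    then have "u \<in> X \<Longrightarrow> v \<in> N" "v \<in> X \<Longrightarrow> u \<in> N"
      unfolding N_def nbrs_def by (auto simp: insert_commute)
    then show "1 \<le> f u + f v" unfolding f_def by auto
  qed (auto simp: f_def)
  then have "tau_star n E \<le> (\<Sum>v<n. f v)" by (rule tau_star_le)
  also have "\<dots> = (real n - card X + card N) / 2"
    using X N unfolding f_def
    by (simp add: sum_divide_distrib[symmetric] sum.distrib sum_subtractf Int_absorb1 Int_absorb2)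
  finally show ?thesis using tau unfolding N_def by simp
qed

lemma exists_permutation_along_edges:
  assumes G: "simple_graph n E" and tau: "real n / 2 \<le> tau_star n E"
  obtains \<sigma> where "\<sigma> permutes {..<n}" "\<And>v. v < n \<Longrightarrow> {v, \<sigma> v} \<in> E"
proof -
  have "hall_condition {..<n} (nbrs E)"
    unfolding hall_condition_def using card_le_card_nbrs_if_tau_star[OF G tau] by blast
  then obtain r where r: "inj_on r {..<n}" "\<And>v. v < n \<Longrightarrow> r v \<in> nbrs E v"
    using hall_marriage[of "{..<n}" "nbrs E"] finite_nbrs[OF G] unfolding sdr_def by auto
  define \<sigma> where "\<sigma> v = (if v < n then r v else v)" for v
  have "inj_on \<sigma> {..<n}" using r(1) unfolding \<sigma>_def inj_on_def by auto
  moreover have "\<sigma> ` {..<n} \<subseteq> {..<n}" using r(2) nbrs_subset[OF G] unfolding \<sigma>_def by auto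
  ultimately have "bij_betw \<sigma> {..<n} {..<n}" by (simp add: bij_betw_def endo_inj_surj)
  then have "\<sigma> permutes {..<n}" by (rule bij_imp_permutes) (simp add: \<sigma>_def)
  moreover have "{v, \<sigma> v} \<in> E" if "v < n" for v
    using r(2)[OF that] that unfolding \<sigma>_def nbrs_def by simp
  ultimately show ?thesis using that by blast
qed

text \<open>Kundu's argument: take realizations \<open>G\<close> of \<open>d\<close> and \<open>H\<close> of \<open>d - 1\<close> with the largest overlap.
  Call the edges of \<open>G - H\<close> red and those of \<open>H - G\<close> blue; every vertex has one more red than
  blue edge. Maximality makes the red edges closed under the exchange "\<open>xv\<close> blue, \<open>xu\<close> and \<open>vz\<close>
  red \<open>\<Longrightarrow>\<close> \<open>uz\<close> red", since otherwise one switch in \<open>G\<close> or in \<open>H\<close> enlarges the overlap. At a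
  vertex \<open>v\<close> of maximal blue degree this produces a vertex \<open>u\<close> of larger red, hence larger blue,
  degree. So there are no blue edges, and \<open>G - H\<close> is a perfect matching.\<close>

locale overlap_maximal =
  fixes n :: nat and d :: "nat \<Rightarrow> int" and G H :: "nat set set"
  assumes realizes_G: "realizes n d G"
    and realizes_H: "realizes n (\<lambda>i. d i - 1) H"
    and overlap_max: "\<And>G' H'. realizes n d G' \<Longrightarrow> realizes n (\<lambda>i. d i - 1) H' \<Longrightarrow>
      card (G' \<inter> H') \<le> card (G \<inter> H)"

lemma exists_overlap_maximal:
  assumes "realizes n d G0" "realizes n (\<lambda>i. d i - 1) H0"
  shows "\<exists>G H. overlap_maximal n d G H"
proof -
  let ?P = "\<lambda>(G, H). realizes n d G \<and> realizes n (\<lambda>i. d i - 1) H"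
  have "card (G \<inter> H) < Suc (card (Pow {..<n :: nat}))" if "?P (G, H)" for G H
  proof -
    have "G \<inter> H \<subseteq> Pow {..<n}" using that unfolding realizes_def simple_graph_def by auto
    then show ?thesis by (simp add: card_mono le_imp_less_Suc)
  qed
  then have "\<forall>y. ?P y \<longrightarrow> (\<lambda>(G, H). card (G \<inter> H)) y < Suc (card (Pow {..<n}))" by auto
  from ex_has_greatest_nat[of ?P "(G0, H0)", OF _ this] assms
  obtain G H where "?P (G, H)" "\<forall>y. ?P y \<longrightarrow> (\<lambda>(G, H). card (G \<inter> H)) y \<le> card (G \<inter> H)"
    by auto
  then have "overlap_maximal n d G H" by unfold_locales auto
  then show ?thesis by blast
qed

context overlap_maximal
begin

lemma simple_G: "simple_graph n G" and simple_H: "simple_graph n H"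
  using realizes_G realizes_H unfolding realizes_def by auto

lemma finite_G: "finite G" and finite_H: "finite H"
  using simple_graph_finite simple_G simple_H by auto

abbreviation red :: "nat \<Rightarrow> nat set" where "red \<equiv> nbrs (G - H)"
abbreviation blue :: "nat \<Rightarrow> nat set" where "blue \<equiv> nbrs (H - G)"

lemma card_red: "v < n \<Longrightarrow> card (red v) = card (blue v) + 1"
proof -
  assume v: "v < n"
  have "int (deg G v) = d v" "int (deg H v) = d v - 1"
    using realizes_G realizes_H v unfolding realizes_def by auto
  moreover have "deg G v = deg (G \<inter> H) v + deg (G - H) v" by (rule deg_Int_Diff[OF finite_G])
  moreover have "deg H v = deg (G \<inter> H) v + deg (H - G) v"
    using deg_Int_Diff[OF finite_H, of v G] by (simp add: Int_commute)
  moreover have "deg (G - H) v = card (red v)" "deg (H - G) v = card (blue v)"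
    using deg_eq_card_nbrs simple_graph_subset simple_G simple_H by (metis Diff_subset)+
  ultimately show ?thesis by linarith
qed

lemma red_closure_in_G:
  assumes xv: "{x, v} \<in> H - G" and xu: "{x, u} \<in> G - H" and vz: "{v, z} \<in> G - H" and "u \<noteq> z"
  shows "{u, z} \<in> G"
proof (rule ccontr)
  assume uz: "{u, z} \<notin> G"
  have "distinct [x, u, v, z]"
    using assms simple_graph_edgeD[OF simple_G, of x u] simple_graph_edgeD[OF simple_G, of v z]
      simple_graph_edgeD[OF simple_H, of x v]
    by (auto simp: insert_commute)
  then have "realizes n d (switch G x u v z)"
    using realizes_G xu vz xv uz by (intro realizes_switch) auto
  then have le: "card (switch G x u v z \<inter> H) \<le> card (G \<inter> H)" using overlap_max realizes_H by blast
  have "insert {x, v} (G \<inter> H) \<subseteq> switch G x u v z \<inter> H" using xv xu vz unfolding switch_def by auto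
  then have "card (insert {x, v} (G \<inter> H)) \<le> card (switch G x u v z \<inter> H)"
    using finite_H by (intro card_mono) auto
  then show False using le xv finite_G by simp
qed

lemma red_closure_notin_H:
  assumes xv: "{x, v} \<in> H - G" and xu: "{x, u} \<in> G - H" and vz: "{v, z} \<in> G - H" and "u \<noteq> z"
  shows "{u, z} \<notin> H"
proof
  assume uz: "{u, z} \<in> H"
  have "distinct [x, v, u, z]"
    using assms simple_graph_edgeD[OF simple_G, of x u] simple_graph_edgeD[OF simple_G, of v z]
      simple_graph_edgeD[OF simple_H, of x v]
    by (auto simp: insert_commute)
  then have "realizes n (\<lambda>i. d i - 1) (switch H x v u z)"
    using realizes_H xu vz xv uz by (intro realizes_switch) auto
  then have le: "card (G \<inter> switch H x v u z) \<le> card (G \<inter> H)" using overlap_max realizes_G by blast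
  let ?K = "insert {x, u} (insert {v, z} (G \<inter> H - {{u, z}}))"
  have "?K \<subseteq> G \<inter> switch H x v u z" using xv xu vz unfolding switch_def by auto
  then have "card ?K \<le> card (G \<inter> switch H x v u z)" using finite_G by (intro card_mono) auto
  moreover have "{x, u} \<noteq> {v, z}" using \<open>distinct [x, v, u, z]\<close> by (auto simp: doubleton_eq_iff)
  then have "card ?K = card (G \<inter> H - {{u, z}}) + 2" using xu vz finite_G by simp
  moreover have "card (G \<inter> H) - 1 \<le> card (G \<inter> H - {{u, z}})" by (simp add: card_Diff_singleton_if)
  ultimately show False using le by linarith
qed

lemma card_red_less:
  assumes vx: "{v, x} \<in> H - G" and xu: "{x, u} \<in> G - H"
  shows "card (red v) < card (red u)"
proof -
  have fin: "finite (red w)" for w using finite_nbrs simple_graph_subset[OF simple_G] by blast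
  have closure: "z \<in> red u" if "z \<in> red v" "z \<noteq> u" for z
    using red_closure_in_G[of x v u z] red_closure_notin_H[of x v u z] vx xu that
    unfolding nbrs_def by (auto simp: insert_commute)
  have x: "x \<in> red u" "x \<notin> red v" using vx xu unfolding nbrs_def by (auto simp: insert_commute)
  have "v \<notin> red v" using simple_graph_edgeD[OF simple_G, of v v] unfolding nbrs_def by auto
  show ?thesis
  proof (cases "u \<in> red v")
    case True
    then have "insert x (insert v (red v - {u})) \<subseteq> red u"
      using x closure unfolding nbrs_def by (auto simp: insert_commute)
    then have "card (insert x (insert v (red v - {u}))) \<le> card (red u)"
      using fin by (rule card_mono[rotated])
    moreover have "x \<noteq> v" using vx simple_graph_edgeD[OF simple_H] by blast
    then have "card (insert x (insert v (red v - {u}))) = Suc (Suc (card (red v - {u})))"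
      using x(2) \<open>v \<notin> red v\<close> fin by simp
    moreover have "card (red v - {u}) = card (red v) - 1" "0 < card (red v)"
      using True fin by (auto simp: card_gt_0_iff)
    ultimately show ?thesis by linarith
  next
    case False
    then have "insert x (red v) \<subseteq> red u" using x closure by auto
    then have "card (insert x (red v)) \<le> card (red u)" using fin by (rule card_mono[rotated])
    then show ?thesis using x fin by simp
  qed
qed

lemma H_subset_G: "H \<subseteq> G"
proof (rule ccontr)
  assume "\<not> H \<subseteq> G"
  then obtain e where e: "e \<in> H" "e \<notin> G" by blast
  then obtain p q where "e = {p, q}" using simple_H unfolding simple_graph_def by blast
  with e have pq: "{p, q} \<in> H - G" by simp
  have simple_blue: "simple_graph n (H - G)" using simple_H by (rule simple_graph_subset) blast
  have p: "p < n" "q \<in> blue p"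
    using simple_graph_edgeD[OF simple_blue pq] pq by (auto simp: nbrs_def)
  have "\<forall>w. w < n \<longrightarrow> card (blue w) < Suc n"
    using card_mono[OF finite_lessThan nbrs_subset[OF simple_blue]] by (simp add: le_imp_less_Suc)
  from ex_has_greatest_nat[of "\<lambda>w. w < n" p "\<lambda>w. card (blue w)", OF p(1) this]
  obtain v where v: "v < n" and v_max: "\<And>w. w < n \<Longrightarrow> card (blue w) \<le> card (blue v)"
    by blast
  have "0 < card (blue p)" using p(2) finite_nbrs[OF simple_blue] card_gt_0_iff by blast
  then have "blue v \<noteq> {}" using v_max[OF p(1)] by (metis card.empty not_le)
  then obtain x where vx: "{v, x} \<in> H - G" unfolding nbrs_def by blast
  have x: "x < n" using simple_graph_edgeD[OF simple_blue vx] by simp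
  then have "red x \<noteq> {}" using card_red[OF x] by (metis add_is_0 card.empty one_neq_zero)
  then obtain u where xu: "{x, u} \<in> G - H" unfolding nbrs_def by blast
  have u: "u < n" using simple_graph_edgeD[OF simple_graph_subset[OF simple_G] xu] by blast
  have "card (blue v) < card (blue u)"
    using card_red_less[OF vx xu] card_red[OF v] card_red[OF u] by simp
  then show False using v_max[OF u] by simp
qed

lemma has_perfect_matching_G: "has_perfect_matching G {..<n}"
proof -
  have red_single: "red v = {the_elem (red v)}" if "v < n" for v
  proof -
    have "blue v = {}" using H_subset_G unfolding nbrs_def by auto
    then have "card (red v) = 1" using card_red[OF that] by simp
    then show ?thesis by (metis card_1_singletonE the_elem_eq)
  qed
  define p where "p v = the_elem (red v)" for v
  have edge: "{v, p v} \<in> G - H" if "v < n" for v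
    using red_single[OF that] unfolding p_def nbrs_def by blast
  show ?thesis unfolding has_perfect_matching_def
  proof (intro exI ballI conjI)
    fix v assume "v \<in> {..<n}"
    then have v: "v < n" by simp
    show vp: "{v, p v} \<in> G" using edge[OF v] by simp
    show pv: "p v \<in> {..<n}" "p v \<noteq> v" using simple_graph_edgeD[OF simple_G vp] by auto
    have "red (p v) = {p (p v)}" using red_single[of "p v"] pv(1) unfolding p_def by simp
    moreover have "v \<in> red (p v)" using edge[OF v] unfolding nbrs_def by (simp add: insert_commute)
    ultimately show "p (p v) = v" by (metis singletonD)
  qed
qed

end

theorem exists_realization_with_perfect_matching:
  assumes "graphical n d" "graphical n (\<lambda>i. d i - 1)"
  obtains G where "realizes n d G" "has_perfect_matching G {..<n}"
proof -
  obtain G H where "overlap_maximal n d G H"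
    using assms exists_overlap_maximal unfolding graphical_def by metis
  then show ?thesis
    using that overlap_maximal.realizes_G overlap_maximal.has_perfect_matching_G by blast
qed

definition rewired_within :: "nat \<Rightarrow> nat set \<Rightarrow> nat set set \<Rightarrow> nat set set \<Rightarrow> bool" where
  "rewired_within n W E E' \<longleftrightarrow> simple_graph n E' \<and> (\<forall>v. deg E' v = deg E v) \<and>
     (\<forall>e. \<not> e \<subseteq> W \<longrightarrow> (e \<in> E' \<longleftrightarrow> e \<in> E))"

lemma rewired_within_refl: "simple_graph n E \<Longrightarrow> rewired_within n W E E"
  unfolding rewired_within_def by simp

lemma rewired_within_trans:
  "rewired_within n Q E E' \<Longrightarrow> rewired_within n R E' E'' \<Longrightarrow> Q \<subseteq> W \<Longrightarrow> R \<subseteq> W \<Longrightarrow>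
    rewired_within n W E E''"
  unfolding rewired_within_def by (metis subset_trans)

lemma rewired_within_switch:
  assumes "simple_graph n E" "distinct [a, b, c, e]"
    and "{a, b} \<in> E" "{c, e} \<in> E" "{a, c} \<notin> E" "{b, e} \<notin> E"
    and "{a, b, c, e} \<subseteq> W"
  shows "rewired_within n W E (switch E a b c e)"
  using simple_graph_deg_switch[OF assms(1-6)] assms(7) unfolding rewired_within_def switch_def
    by auto

context
  fixes \<sigma> :: "nat \<Rightarrow> nat"
  assumes perm: "permutation \<sigma>"
begin

lemma finite_orbit_permutation: "finite (orbit \<sigma> x)"
  by (rule finite_orbit[OF permutation_self_in_orbit[OF perm]])

lemma orbit_eq_if_in_orbit: "y \<in> orbit \<sigma> x \<Longrightarrow> orbit \<sigma> y = orbit \<sigma> x"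
  by (rule orbit_cyclic_eq3[OF cyclic_on_orbit'[OF perm]])

lemma orbits_disjoint: "y \<notin> orbit \<sigma> x \<Longrightarrow> orbit \<sigma> y \<inter> orbit \<sigma> x = {}"
  using orbit_eq_if_in_orbit permutation_self_in_orbit[OF perm] by blast

lemma image_orbit: "\<sigma> ` orbit \<sigma> x = orbit \<sigma> x"
proof -
  have "\<sigma> ` orbit \<sigma> x \<subseteq> orbit \<sigma> x" by (auto intro: orbit.step)
  moreover have "inj \<sigma>" using permutation_bijective[OF perm] by (rule bij_is_inj)
  then have "inj_on \<sigma> (orbit \<sigma> x)" by (rule inj_on_subset) simp
  ultimately show ?thesis using finite_orbit_permutation by (simp add: endo_inj_surj)
qed

lemma orbit_subset_invariant:
  assumes "\<sigma> ` W \<subseteq> W" "a \<in> W"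
  shows "orbit \<sigma> a \<subseteq> W"
proof
  fix y assume "y \<in> orbit \<sigma> a"
  then show "y \<in> W" by induction (use assms in auto)
qed

lemma orbit_enumeration:
  "orbit \<sigma> x = (\<lambda>i. (\<sigma> ^^ i) x) ` {0..<card (orbit \<sigma> x)}"
  "inj_on (\<lambda>i. (\<sigma> ^^ i) x) {0..<card (orbit \<sigma> x)}"
proof -
  have enum: "orbit \<sigma> x = (\<lambda>i. (\<sigma> ^^ i) x) ` {0..<funpow_dist1 \<sigma> x x}"
    by (rule orbit_conv_funpow_dist1[OF permutation_self_in_orbit[OF perm]])
  moreover have inj: "inj_on (\<lambda>i. (\<sigma> ^^ i) x) {0..<funpow_dist1 \<sigma> x x}"
    by (rule inj_on_funpow_dist1[OF permutation_self_in_orbit[OF perm]])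
  ultimately have "card (orbit \<sigma> x) = funpow_dist1 \<sigma> x x" by (simp add: card_image)
  then show "orbit \<sigma> x = (\<lambda>i. (\<sigma> ^^ i) x) ` {0..<card (orbit \<sigma> x)}"
    "inj_on (\<lambda>i. (\<sigma> ^^ i) x) {0..<card (orbit \<sigma> x)}"
    using enum inj by simp_all
qed

lemma has_perfect_matching_even_orbit:
  assumes "even (card (orbit \<sigma> x))" "\<And>y. y \<in> orbit \<sigma> x \<Longrightarrow> {y, \<sigma> y} \<in> E"
  shows "has_perfect_matching E (orbit \<sigma> x)"
proof -
  let ?s = "\<lambda>i. (\<sigma> ^^ i) x"
  have k: "card (orbit \<sigma> x) = 0 + 2 * (card (orbit \<sigma> x) div 2)" using assms(1) by simp
  have "has_perfect_matching E (?s ` {0..<0 + 2 * (card (orbit \<sigma> x) div 2)})"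
  proof (rule has_perfect_matching_path)
    show "inj_on ?s {0..<0 + 2 * (card (orbit \<sigma> x) div 2)}" using orbit_enumeration(2) k by simp
    fix i
    have "?s i \<in> orbit \<sigma> x" by (rule funpow_in_orbit[OF permutation_self_in_orbit[OF perm]])
    then show "{?s i, ?s (Suc i)} \<in> E" using assms(2) by simp
  qed
  then show ?thesis using orbit_enumeration(1) k by simp
qed

lemma has_perfect_matching_odd_orbit_Diff:
  assumes "odd (card (orbit \<sigma> x))"
    and "\<And>y. y \<in> orbit \<sigma> x \<Longrightarrow> y \<noteq> x \<Longrightarrow> \<sigma> y \<noteq> x \<Longrightarrow> {y, \<sigma> y} \<in> E"
  shows "has_perfect_matching E (orbit \<sigma> x - {x})"
proof -
  let ?s = "\<lambda>i. (\<sigma> ^^ i) x"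
  let ?t = "card (orbit \<sigma> x) div 2"
  have k: "card (orbit \<sigma> x) = 1 + 2 * ?t" using assms(1) by simp
  have inj: "inj_on ?s {0..<1 + 2 * ?t}" using orbit_enumeration(2) k by simp
  have not_x: "?s i \<noteq> x" if "i \<in> {1..<1 + 2 * ?t}" for i
    using inj_onD[OF inj, of i 0] that by auto
  have "has_perfect_matching E (?s ` {1..<1 + 2 * ?t})"
  proof (rule has_perfect_matching_path)
    show "inj_on ?s {1..<1 + 2 * ?t}" using inj by (rule inj_on_subset) auto
    fix i assume "1 \<le> i" "Suc i < 1 + 2 * ?t"
    moreover have "?s i \<in> orbit \<sigma> x"
      by (rule funpow_in_orbit[OF permutation_self_in_orbit[OF perm]])
    ultimately show "{?s i, ?s (Suc i)} \<in> E" using assms(2) not_x[of i] not_x[of "Suc i"] by simp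
  qed
  moreover have "?s ` {1..<1 + 2 * ?t} = orbit \<sigma> x - {x}"
  proof -
    have "{1..<1 + 2 * ?t} = {0..<1 + 2 * ?t} - {0}" by auto
    then have "?s ` {1..<1 + 2 * ?t} = ?s ` {0..<1 + 2 * ?t} - {?s 0}"
      using inj by (simp add: inj_on_image_set_diff)
    then show ?thesis using orbit_enumeration(1) k by simp
  qed
  ultimately show ?thesis by simp
qed

lemma has_perfect_matching_odd_orbit_pair:
  assumes odd: "odd (card (orbit \<sigma> x))" "odd (card (orbit \<sigma> y))" and "y \<notin> orbit \<sigma> x"
    and "{x, y} \<in> E"
    and "\<And>z. z \<in> orbit \<sigma> x \<Longrightarrow> z \<noteq> x \<Longrightarrow> \<sigma> z \<noteq> x \<Longrightarrow> {z, \<sigma> z} \<in> E"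
    and "\<And>z. z \<in> orbit \<sigma> y \<Longrightarrow> z \<noteq> y \<Longrightarrow> \<sigma> z \<noteq> y \<Longrightarrow> {z, \<sigma> z} \<in> E"
  shows "has_perfect_matching E (orbit \<sigma> x \<union> orbit \<sigma> y)"
proof -
  have disj: "orbit \<sigma> y \<inter> orbit \<sigma> x = {}" using orbits_disjoint assms(3) .
  have "x \<noteq> y" using assms(3) permutation_self_in_orbit[OF perm] by blast
  have "has_perfect_matching E ((orbit \<sigma> x - {x}) \<union> (orbit \<sigma> y - {y}))"
    using has_perfect_matching_odd_orbit_Diff[OF odd(1) assms(5)]
      has_perfect_matching_odd_orbit_Diff[OF odd(2) assms(6)] disj
    by (intro has_perfect_matching_Un) auto
  then have "has_perfect_matching E ((orbit \<sigma> x - {x}) \<union> (orbit \<sigma> y - {y}) \<union> {x, y})"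
    using has_perfect_matching_edge[OF \<open>x \<noteq> y\<close> assms(4)] by (rule has_perfect_matching_Un)
      (use disj permutation_self_in_orbit[OF perm, of x] permutation_self_in_orbit[OF perm, of y]
        in auto)
  moreover have "(orbit \<sigma> x - {x}) \<union> (orbit \<sigma> y - {y}) \<union> {x, y} = orbit \<sigma> x \<union> orbit \<sigma> y"
    using permutation_self_in_orbit[OF perm, of x] permutation_self_in_orbit[OF perm, of y] by auto
  ultimately show ?thesis by simp
qed

lemma has_perfect_matching_switch_odd_orbits:
  assumes odd: "odd (card (orbit \<sigma> a))" "odd (card (orbit \<sigma> b))" and b: "b \<notin> orbit \<sigma> a"
    and cyc: "\<And>w. w \<in> orbit \<sigma> a \<union> orbit \<sigma> b \<Longrightarrow> {w, \<sigma> w} \<in> E"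
  shows "has_perfect_matching (switch E a (\<sigma> a) b (\<sigma> b)) (orbit \<sigma> a \<union> orbit \<sigma> b)"
proof (rule has_perfect_matching_odd_orbit_pair[OF odd b])
  let ?E' = "switch E a (\<sigma> a) b (\<sigma> b)"
  have disj: "orbit \<sigma> b \<inter> orbit \<sigma> a = {}" using orbits_disjoint[OF b] .
  have in_orbit: "a \<in> orbit \<sigma> a" "\<sigma> a \<in> orbit \<sigma> a" "b \<in> orbit \<sigma> b" "\<sigma> b \<in> orbit \<sigma> b"
    using permutation_self_in_orbit[OF perm] by (auto intro: orbit.base)
  have kept: "e \<in> ?E'" if "e \<in> E" "e \<noteq> {a, \<sigma> a}" "e \<noteq> {b, \<sigma> b}" for e
    using that unfolding switch_def by auto
  show "{a, b} \<in> ?E'" unfolding switch_def by simp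
  fix z
  show "{z, \<sigma> z} \<in> ?E'" if z: "z \<in> orbit \<sigma> a" "z \<noteq> a" "\<sigma> z \<noteq> a"
  proof -
    have "{z, \<sigma> z} \<noteq> {a, \<sigma> a}" using z(2,3) by (auto simp: doubleton_eq_iff)
    moreover have "{z, \<sigma> z} \<noteq> {b, \<sigma> b}" using z(1) disj in_orbit by (auto simp: doubleton_eq_iff)
    ultimately show ?thesis using kept cyc z(1) by blast
  qed
  show "{z, \<sigma> z} \<in> ?E'" if z: "z \<in> orbit \<sigma> b" "z \<noteq> b" "\<sigma> z \<noteq> b"
  proof -
    have "{z, \<sigma> z} \<noteq> {b, \<sigma> b}" using z(2,3) by (auto simp: doubleton_eq_iff)
    moreover have "{z, \<sigma> z} \<noteq> {a, \<sigma> a}" using z(1) disj in_orbit by (auto simp: doubleton_eq_iff)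
    ultimately show ?thesis using kept cyc z(1) by blast
  qed
qed

lemma odd_orbit_pair_rewiring:
  assumes odd: "odd (card (orbit \<sigma> a))" "odd (card (orbit \<sigma> b))" and b: "b \<notin> orbit \<sigma> a"
    and G: "simple_graph n E" and cyc: "\<And>w. w \<in> orbit \<sigma> a \<union> orbit \<sigma> b \<Longrightarrow> {w, \<sigma> w} \<in> E"
  obtains E' where "rewired_within n (orbit \<sigma> a \<union> orbit \<sigma> b) E E'"
    "has_perfect_matching E' (orbit \<sigma> a \<union> orbit \<sigma> b)"
proof (cases "\<exists>x\<in>orbit \<sigma> a. \<exists>y\<in>orbit \<sigma> b. {x, y} \<in> E")
  case True
  then obtain x y where xy: "x \<in> orbit \<sigma> a" "y \<in> orbit \<sigma> b" "{x, y} \<in> E" by blast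
  have orbits: "orbit \<sigma> x = orbit \<sigma> a" "orbit \<sigma> y = orbit \<sigma> b"
    using orbit_eq_if_in_orbit xy(1,2) by auto
  have "has_perfect_matching E (orbit \<sigma> x \<union> orbit \<sigma> y)"
    by (rule has_perfect_matching_odd_orbit_pair)
      (use orbits odd b xy cyc orbits_disjoint[OF b] in auto)
  then show ?thesis using that rewired_within_refl[OF G] orbits by metis
next
  case False
  have disj: "orbit \<sigma> b \<inter> orbit \<sigma> a = {}" using orbits_disjoint[OF b] .
  have in_orbit: "a \<in> orbit \<sigma> a" "\<sigma> a \<in> orbit \<sigma> a" "b \<in> orbit \<sigma> b" "\<sigma> b \<in> orbit \<sigma> b"
    using permutation_self_in_orbit[OF perm] by (auto intro: orbit.base)
  have edges: "{a, \<sigma> a} \<in> E" "{b, \<sigma> b} \<in> E" using cyc in_orbit by auto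
  have "distinct [a, \<sigma> a, b, \<sigma> b]"
    using simple_graph_edgeD[OF G edges(1)] simple_graph_edgeD[OF G edges(2)] disj in_orbit by auto
  moreover have "{a, b} \<notin> E" "{\<sigma> a, \<sigma> b} \<notin> E" using False in_orbit by auto
  ultimately have "rewired_within n (orbit \<sigma> a \<union> orbit \<sigma> b) E (switch E a (\<sigma> a) b (\<sigma> b))"
    by (intro rewired_within_switch[OF G _ edges]) (use in_orbit in auto)
  then show ?thesis using that has_perfect_matching_switch_odd_orbits[OF odd b cyc] by blast
qed

lemma exists_rewiring_matching_orbits:
  assumes W: "finite W" "\<sigma> ` W = W" "even (card W)" "W \<noteq> {}" and G: "simple_graph n E"
    and cyc: "\<And>w. w \<in> W \<Longrightarrow> {w, \<sigma> w} \<in> E"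
  obtains Q E' where "Q \<subseteq> W" "\<sigma> ` Q = Q" "Q \<noteq> {}" "even (card Q)"
    "rewired_within n Q E E'" "has_perfect_matching E' Q"
proof (cases "\<exists>a\<in>W. even (card (orbit \<sigma> a))")
  case True
  then obtain a where a: "a \<in> W" "even (card (orbit \<sigma> a))" by blast
  have sub: "orbit \<sigma> a \<subseteq> W" using orbit_subset_invariant[OF equalityD1[OF W(2)] a(1)] .
  have "has_perfect_matching E (orbit \<sigma> a)"
    by (rule has_perfect_matching_even_orbit[OF a(2)]) (use cyc sub in auto)
  then show ?thesis
    using that[OF sub image_orbit _ a(2) rewired_within_refl[OF G]]
      permutation_self_in_orbit[OF perm, of a]
    by blast
next
  case False
  obtain a where a: "a \<in> W" using W(4) by blast
  have sub_a: "orbit \<sigma> a \<subseteq> W" using orbit_subset_invariant[OF equalityD1[OF W(2)] a] .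
  have "card (W - orbit \<sigma> a) = card W - card (orbit \<sigma> a)"
    by (rule card_Diff_subset[OF finite_orbit_permutation sub_a])
  moreover have "card (orbit \<sigma> a) \<le> card W" by (rule card_mono[OF W(1) sub_a])
  ultimately have "card W = card (orbit \<sigma> a) + card (W - orbit \<sigma> a)" by linarith
  then have "odd (card (W - orbit \<sigma> a))" using W(3) False a by auto
  then have "W - orbit \<sigma> a \<noteq> {}" by (intro notI) simp
  then obtain b where b: "b \<in> W" "b \<notin> orbit \<sigma> a" by blast
  have sub_b: "orbit \<sigma> b \<subseteq> W" using orbit_subset_invariant[OF equalityD1[OF W(2)] b(1)] .
  let ?Q = "orbit \<sigma> a \<union> orbit \<sigma> b"
  have odd: "odd (card (orbit \<sigma> a))" "odd (card (orbit \<sigma> b))" using False a b(1) by auto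
  obtain E' where "rewired_within n ?Q E E'" "has_perfect_matching E' ?Q"
    using odd_orbit_pair_rewiring[OF odd b(2) G] cyc sub_a sub_b by blast
  moreover have "card ?Q = card (orbit \<sigma> a) + card (orbit \<sigma> b)"
    using orbits_disjoint[OF b(2)] finite_orbit_permutation
    by (subst card_Un_disjoint) (auto simp: Int_commute)
  then have "even (card ?Q)" using odd by simp
  moreover have "\<sigma> ` ?Q = ?Q" using image_orbit by (simp add: image_Un)
  moreover have "?Q \<subseteq> W" "?Q \<noteq> {}"
    using sub_a sub_b permutation_self_in_orbit[OF perm, of a] by auto
  ultimately show ?thesis using that by blast
qed

lemma exists_rewiring_with_perfect_matching:
  assumes "finite W" "\<sigma> ` W = W" "even (card W)" "simple_graph n E" "\<And>w. w \<in> W \<Longrightarrow> {w, \<sigma> w} \<in> E"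
  shows "\<exists>E'. rewired_within n W E E' \<and> has_perfect_matching E' W"
  using assms
proof (induction "card W" arbitrary: W E rule: less_induct)
  case less
  note W = less.prems(1-3) and G = less.prems(4) and cyc = less.prems(5)
  show ?case
  proof (cases "W = {}")
    case True
    then show ?thesis using rewired_within_refl[OF G] has_perfect_matching_empty by blast
  next
    case False
    obtain Q E1 where Q: "Q \<subseteq> W" "\<sigma> ` Q = Q" "Q \<noteq> {}" "even (card Q)"
      and E1: "rewired_within n Q E E1" "has_perfect_matching E1 Q"
      by (rule exists_rewiring_matching_orbits[OF W False G cyc])
    let ?R = "W - Q"
    have fin_Q: "finite Q" using W(1) Q(1) by (rule finite_subset[rotated])
    have "card ?R = card W - card Q" by (rule card_Diff_subset[OF fin_Q Q(1)])
    moreover have "card Q \<le> card W" by (rule card_mono[OF W(1) Q(1)])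
    moreover have "0 < card Q" using fin_Q Q(3) by (simp add: card_gt_0_iff)
    ultimately have card_R: "card ?R < card W" "even (card ?R)" using W(3) Q(4) by auto
    have "inj \<sigma>" using permutation_bijective[OF perm] by (rule bij_is_inj)
    then have inv_R: "\<sigma> ` ?R = ?R" using W(2) Q(2) by (simp add: image_set_diff)
    have simple_E1: "simple_graph n E1" using E1(1) unfolding rewired_within_def by simp
    have cyc_R: "{w, \<sigma> w} \<in> E1" if "w \<in> ?R" for w
      using E1(1) cyc[of w] that unfolding rewired_within_def by auto
    obtain E2 where E2: "rewired_within n ?R E1 E2" "has_perfect_matching E2 ?R"
      using less.hyps[OF card_R(1) _ inv_R card_R(2) simple_E1 cyc_R] W(1) by blast
    have "has_perfect_matching E2 Q"
      by (rule has_perfect_matching_mono[OF E1(2)]) (use E2(1) in \<open>auto simp: rewired_within_def\<close>)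
    then have "has_perfect_matching E2 (Q \<union> ?R)" using E2(2) by (rule has_perfect_matching_Un) auto
    moreover have "Q \<union> ?R = W" using Q(1) by blast
    moreover have "rewired_within n W E E2" using rewired_within_trans[OF E1(1) E2(1) Q(1)] by blast
    ultimately show ?thesis by auto
  qed
qed

end

lemma graphical_minus_one_if_tau_star:
  assumes R: "realizes n d E" and tau: "real n / 2 \<le> tau_star n E" and "even n"
  shows "graphical n (\<lambda>i. d i - 1)"
proof -
  have G: "simple_graph n E" using R unfolding realizes_def by simp
  obtain \<sigma> where \<sigma>: "\<sigma> permutes {..<n}" "\<And>v. v < n \<Longrightarrow> {v, \<sigma> v} \<in> E"
    using exists_permutation_along_edges[OF G tau] by blast
  have "permutation \<sigma>" using \<sigma>(1) permutation_permutes by blast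
  then obtain E' where "rewired_within n {..<n} E E'" "has_perfect_matching E' {..<n}"
    using exists_rewiring_with_perfect_matching[of \<sigma> "{..<n}" n E] permutes_image[OF \<sigma>(1)]
      assms(3) G \<sigma>(2)
    by auto
  moreover from this(1) have "realizes n d E'"
    using R unfolding rewired_within_def realizes_def by simp
  ultimately show ?thesis using graphical_minus_one_if_perfect_matching by blast
qed

theorem corollary21:
  fixes n :: nat and d :: "nat \<Rightarrow> int"
  assumes "graphical n d" and "even n"
  shows "mu_bar n d > 0 \<longleftrightarrow> graphical n (\<lambda>i. d i - 1)"
proof
  assume "mu_bar n d > 0"
  then obtain E where "realizes n d E" "real n / 2 \<le> tau_star n E"
    using mu_bar_pos_iff_tau_star by blast
  then show "graphical n (\<lambda>i. d i - 1)" using graphical_minus_one_if_tau_star assms(2) by blast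
next
  assume "graphical n (\<lambda>i. d i - 1)"
  then obtain G where "realizes n d G" "has_perfect_matching G {..<n}"
    using exists_realization_with_perfect_matching assms(1) by blast
  then show "mu_bar n d > 0"
    using mu_bar_pos_iff_tau_star tau_star_ge_half_if_perfect_matching by blast
qed

end
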